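(* Let $M>0$ and let $\phi$ be a real odd $C^\infty$ $2\pi$-periodic function with zero mean such that $\|\partial_x^2w\|_H^2-(w\partial_x\phi,w)\ge M\|w\|_H^2$ for all $w\in H^2$ with $w(0)=0$. For $s\in\mathbb R$ put $\phi_s(x)=\phi(x-s)$ and for $u\in H$ define $F(u):=\min_{s\in[-\pi,\pi]}\|u-\phi_s\|_H^2$. Let $u(t)\in H_0$, $t\in[0,T]$, be smooth. Then $t\mapsto F(u(t))$ is absolutely continuous and $$\frac{d}{dt}F(u(t))=\frac{d}{dt}\|v(t)\|_H^2=2(\partial_tu(t),v(t))\quad\text{for almost all }t\in[0,T],$$ where $v(t)=u(t)-\phi_{s^*(t)}$ and $s^*(t)$ is a minimizer in the definition of $F(u(t))$.
   Context: $H=L^2_{per}(-\pi,\pi)$ with inner product $(v,w)=\frac1{2\pi}\int_{-\pi}^{\pi}v\bar w\,dx$; $H_0$ is the subspace of zero-mean functions; $H^2$ is the periodic Sobolev space. *)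

theory Defs
  imports "HOL-Analysis.Analysis"
begin

definition per2pi :: "(real \<Rightarrow> real) \<Rightarrow> bool" where
  "per2pi f \<longleftrightarrow> (\<forall>x. f (x + 2 * pi) = f x)"

definition ipH :: "(real \<Rightarrow> real) \<Rightarrow> (real \<Rightarrow> real) \<Rightarrow> real" where
  "ipH f g = (1 / (2 * pi)) * integral {-pi..pi} (\<lambda>x. f x * g x)"

definition normsqH :: "(real \<Rightarrow> real) \<Rightarrow> real" where
  "normsqH f = ipH f f"

definition abs_cont_on :: "real \<Rightarrow> real \<Rightarrow> (real \<Rightarrow> real) \<Rightarrow> bool" where
  "abs_cont_on a b f \<longleftrightarrow>
     (\<forall>\<epsilon>>0. \<exists>\<delta>>0. \<forall>(n::nat) (l::nat \<Rightarrow> real) (r::nat \<Rightarrow> real).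
        (\<forall>i<n. a \<le> l i \<and> l i \<le> r i \<and> r i \<le> b) \<and>
        (\<forall>i<n. \<forall>j<n. i \<noteq> j \<longrightarrow> r i \<le> l j \<or> r j \<le> l i) \<and>
        (\<Sum>i<n. r i - l i) < \<delta>
        \<longrightarrow> (\<Sum>i<n. \<bar>f (r i) - f (l i)\<bar>) < \<epsilon>)"

definition smooth1 :: "(real \<Rightarrow> real) \<Rightarrow> bool" where
  "smooth1 f \<longleftrightarrow> (\<forall>n. \<forall>x. (deriv ^^ n) f differentiable (at x))"

definition pt :: "(real \<Rightarrow> real \<Rightarrow> real) \<Rightarrow> real \<Rightarrow> real \<Rightarrow> real" where
  "pt g = (\<lambda>t x. deriv (\<lambda>\<tau>. g \<tau> x) t)"

definition px :: "(real \<Rightarrow> real \<Rightarrow> real) \<Rightarrow> real \<Rightarrow> real \<Rightarrow> real" where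
  "px g = (\<lambda>t x. deriv (\<lambda>\<xi>. g t \<xi>) x)"

fun pderivs :: "bool list \<Rightarrow> (real \<Rightarrow> real \<Rightarrow> real) \<Rightarrow> real \<Rightarrow> real \<Rightarrow> real" where
  "pderivs [] g = g"
| "pderivs (b # bs) g = (if b then pt else px) (pderivs bs g)"

definition smooth2 :: "(real \<Rightarrow> real \<Rightarrow> real) \<Rightarrow> bool" where
  "smooth2 u \<longleftrightarrow> (\<forall>bs. continuous_on UNIV (\<lambda>(t, x). pderivs bs u t x) \<and>
      (\<forall>t x. (\<lambda>\<tau>. pderivs bs u \<tau> x) differentiable (at t) \<and>
             (\<lambda>\<xi>. pderivs bs u t \<xi>) differentiable (at x)))"

text \<open>Periodic Sobolev space H^2 (real-valued): w is C^1, 2pi-periodic, w' absolutely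
  continuous, and w'' (the a.e. derivative of w') is square integrable.\<close>

definition H2per :: "(real \<Rightarrow> real) \<Rightarrow> bool" where
  "H2per w \<longleftrightarrow> per2pi w \<and> (\<forall>x. w differentiable (at x)) \<and>
     abs_cont_on (-pi) pi (deriv w) \<and>
     (\<lambda>x. (deriv (deriv w) x)\<^sup>2) integrable_on {-pi..pi}"

text \<open>F(u) = min over s in [-pi,pi] of |u - phi_s|^2, phi_s x = phi (x - s)
  (the minimum is attained; we write it as an infimum).\<close>

definition Fdist :: "(real \<Rightarrow> real) \<Rightarrow> (real \<Rightarrow> real) \<Rightarrow> real" where
  "Fdist \<phi> f = Inf ((\<lambda>s. normsqH (\<lambda>x. f x - \<phi> (x - s))) ` {-pi..pi})"

end

theory Submission
  imports Defs
begin

text \<open>Each squared distance \<open>G t s = \<parallel>u(t) - \<phi>\<^sub>s\<parallel>\<^sup>2\<close> is a \<open>C\<^sup>2\<close> function of \<open>t\<close> whose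
  second derivative is bounded uniformly in the shift \<open>s\<close>, say by \<open>2K\<close>. Hence its
  infimum \<open>F\<close> over \<open>s\<close> is Lipschitz (so absolutely continuous), and \<open>F t - K t\<^sup>2\<close>,
  an infimum of concave functions, is concave. A concave function is differentiable
  off a countable set, in particular almost everywhere. Where \<open>F\<close> is differentiable
  and \<open>s\<close> is a minimizer, \<open>G \<cdot> s - F\<close> is a differentiable nonnegative function
  vanishing at \<open>t\<close>, so its derivative there vanishes: \<open>F' t = \<partial>\<^sub>t G t s = 2 (\<partial>\<^sub>t u, v)\<close>.\<close>

lemma tendsto_at_right_Inf_mono:
  fixes f :: "real \<Rightarrow> real"
  assumes mono: "\<And>y z. x < y \<Longrightarrow> y \<le> z \<Longrightarrow> z < b \<Longrightarrow> f y \<le> f z"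
    and bdd: "bdd_below (f ` {x<..<b})" and "x < b"
  shows "(f \<longlongrightarrow> Inf (f ` {x<..<b})) (at_right x)"
proof (rule order_tendstoI)
  fix c assume "Inf (f ` {x<..<b}) < c"
  then obtain z where z: "z \<in> {x<..<b}" "f z < c"
    using \<open>x < b\<close> bdd by (auto simp: cInf_less_iff)
  show "\<forall>\<^sub>F y in at_right x. f y < c"
  proof (rule eventually_mono[OF eventually_at_right_real])
    show "x < z" using z by simp
    show "f y < c" if "y \<in> {x<..<z}" for y
      using mono[of y z] that z by fastforce
  qed
next
  fix c assume "c < Inf (f ` {x<..<b})"
  then have lower: "c < f y" if "y \<in> {x<..<b}" for y
    using cInf_lower[OF imageI[OF that] bdd] by linarith
  show "\<forall>\<^sub>F y in at_right x. c < f y"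
    using eventually_at_right_real[OF \<open>x < b\<close>] by (rule eventually_mono) (rule lower)
qed

lemma tendsto_at_left_Sup_mono:
  fixes f :: "real \<Rightarrow> real"
  assumes mono: "\<And>y z. a < y \<Longrightarrow> y \<le> z \<Longrightarrow> z < x \<Longrightarrow> f y \<le> f z"
    and bdd: "bdd_above (f ` {a<..<x})" and "a < x"
  shows "(f \<longlongrightarrow> Sup (f ` {a<..<x})) (at_left x)"
proof (rule order_tendstoI)
  fix c assume "c < Sup (f ` {a<..<x})"
  then obtain w where w: "w \<in> {a<..<x}" "c < f w"
    using \<open>a < x\<close> bdd by (auto simp: less_cSup_iff)
  show "\<forall>\<^sub>F y in at_left x. c < f y"
  proof (rule eventually_mono[OF eventually_at_left_real])
    show "w < x" using w by simp
    show "c < f y" if "y \<in> {w<..<x}" for y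
      using mono[of w y] that w by fastforce
  qed
next
  fix c assume "Sup (f ` {a<..<x}) < c"
  then have upper: "f y < c" if "y \<in> {a<..<x}" for y
    using cSup_upper[OF imageI[OF that] bdd] by linarith
  show "\<forall>\<^sub>F y in at_left x. f y < c"
    using eventually_at_left_real[OF \<open>a < x\<close>] by (rule eventually_mono) (rule upper)
qed

lemma countable_disjoint_intervals:
  fixes l r :: "real \<Rightarrow> real"
  assumes nonempty: "\<And>x. x \<in> N \<Longrightarrow> l x < r x"
    and ordered: "\<And>x y. x \<in> N \<Longrightarrow> y \<in> N \<Longrightarrow> x < y \<Longrightarrow> r x \<le> l y"
  shows "countable N"
proof -
  obtain q where q: "\<And>x. x \<in> N \<Longrightarrow> q x \<in> \<rat> \<and> l x < q x \<and> q x < r x"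
    using Rats_dense_in_real[OF nonempty] by metis
  have "q x < q y" if "x \<in> N" "y \<in> N" "x < y" for x y
    using q[OF that(1)] q[OF that(2)] ordered[OF that] by linarith
  then have "inj_on q N"
    by (metis inj_onI linorder_neq_iff order_less_irrefl)
  moreover have "countable (q ` N)"
    using q by (intro countable_subset[OF _ countable_rat]) auto
  ultimately show ?thesis
    using countable_image_inj_on by blast
qed

lemma convex_on_one_sided_slopes:
  fixes f :: "real \<Rightarrow> real"
  defines "slope x y \<equiv> (f y - f x) / (y - x)"
  assumes convex: "convex_on {a<..<b} f" and x: "a < x" "x < b"
  shows "(slope x \<longlongrightarrow> Inf (slope x ` {x<..<b})) (at_right x)"
    and "(slope x \<longlongrightarrow> Sup (slope x ` {a<..<x})) (at_left x)"
    and "Sup (slope x ` {a<..<x}) \<le> Inf (slope x ` {x<..<b})"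
    and "\<And>y. x < y \<Longrightarrow> y < b \<Longrightarrow> Inf (slope x ` {x<..<b}) \<le> Sup (slope y ` {a<..<y})"
proof -
  have sym: "slope x y = slope y x" for x y
    unfolding slope_def by (metis minus_diff_eq minus_divide_divide)
  have mono: "slope x y \<le> slope x z" "slope x z \<le> slope y z"
    if "a < x" "x < y" "y < z" "z < b" for x y z
    using convex_on_slope_le[OF convex, of x z y] that
    by (simp_all add: slope_def sym[unfolded slope_def])
  have chain: "slope x w \<le> slope x y" if "a < w" "w < x" "x < y" "y < b" for w x y
    using mono[of w x y] that sym[of x w] by linarith
  have bdd: "bdd_below (slope x ` {x<..<b})" "bdd_above (slope x ` {a<..<x})"
    if x: "a < x" "x < b" for x
  proof -
    obtain w y where "a < w" "w < x" "x < y" "y < b" using x dense by meson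
    then show "bdd_below (slope x ` {x<..<b})" "bdd_above (slope x ` {a<..<x})"
      using chain by (auto intro!: bdd_belowI2[where m="slope x w"] bdd_aboveI2[where M="slope x y"])
  qed
  show "(slope x \<longlongrightarrow> Inf (slope x ` {x<..<b})) (at_right x)"
  proof (rule tendsto_at_right_Inf_mono[OF _ bdd(1)[OF x] \<open>x < b\<close>])
    show "slope x y \<le> slope x z" if "x < y" "y \<le> z" "z < b" for y z
      using mono(1)[of x y z] that x by (cases "y = z") auto
  qed
  show "(slope x \<longlongrightarrow> Sup (slope x ` {a<..<x})) (at_left x)"
  proof (rule tendsto_at_left_Sup_mono[OF _ bdd(2)[OF x] \<open>a < x\<close>])
    show "slope x y \<le> slope x z" if "a < y" "y \<le> z" "z < x" for y z
      using mono(2)[of y z x] that x sym by (cases "y = z") auto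
  qed
  show "Sup (slope x ` {a<..<x}) \<le> Inf (slope x ` {x<..<b})"
    using chain x by (intro cSup_least cInf_greatest) auto
  show "Inf (slope x ` {x<..<b}) \<le> Sup (slope y ` {a<..<y})" if "x < y" "y < b" for y
  proof -
    have "Inf (slope x ` {x<..<b}) \<le> slope x y"
      using bdd(1)[OF x] that by (intro cInf_lower) auto
    also have "\<dots> \<le> Sup (slope y ` {a<..<y})"
      using bdd(2)[of y] that x by (subst sym) (intro cSup_upper; auto)
    finally show ?thesis .
  qed
qed

lemma convex_on_differentiable_off_countable:
  fixes f :: "real \<Rightarrow> real"
  assumes convex: "convex_on {a<..<b} f"
  obtains N where "countable N" "\<And>x. x \<in> {a<..<b} \<Longrightarrow> x \<notin> N \<Longrightarrow> f differentiable (at x)"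
proof -
  define slope where "slope x y = (f y - f x) / (y - x)" for x y
  define D\<^sub>r where "D\<^sub>r x = Inf (slope x ` {x<..<b})" for x
  define D\<^sub>l where "D\<^sub>l x = Sup (slope x ` {a<..<x})" for x
  note one_sided = convex_on_one_sided_slopes[OF convex, folded slope_def, folded D\<^sub>r_def D\<^sub>l_def]
  define N where "N = {x \<in> {a<..<b}. D\<^sub>l x < D\<^sub>r x}"
  have "countable N"
    by (rule countable_disjoint_intervals[of N D\<^sub>l D\<^sub>r]) (auto simp: N_def intro: one_sided(4))
  moreover have "f differentiable (at x)" if x: "x \<in> {a<..<b}" "x \<notin> N" for x
  proof -
    have "D\<^sub>l x = D\<^sub>r x" using one_sided(3)[of x] x unfolding N_def by force
    then have "(slope x \<longlongrightarrow> D\<^sub>r x) (at x)"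
      using one_sided(1,2)[of x] x unfolding filterlim_at_split by simp
    then show ?thesis
      unfolding real_differentiable_def has_field_derivative_iff slope_def by blast
  qed
  ultimately show ?thesis using that by blast
qed

lemma has_real_derivative_if_quadratic_remainder:
  fixes g :: "real \<Rightarrow> real"
  assumes t: "a < t" "t < b"
    and remainder: "\<And>x. x \<in> {a..b} \<Longrightarrow> \<bar>g x - g t - d * (x - t)\<bar> \<le> C * (x - t)\<^sup>2"
  shows "(g has_real_derivative d) (at t)"
proof -
  have "\<forall>\<^sub>F x in at t. norm ((g x - g t) / (x - t) - d) \<le> C * \<bar>x - t\<bar>"
  proof (rule eventually_mono[OF eventually_conj[OF eventually_at_in_open'[of "{a<..<b}"]
          eventually_neq_at_within[of t]]])
    fix x assume x: "x \<in> {a<..<b} \<and> x \<noteq> t"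
    have "((g x - g t) / (x - t) - d) * (x - t) = g x - g t - d * (x - t)"
      using x by (simp add: field_simps)
    then have "\<bar>(g x - g t) / (x - t) - d\<bar> * \<bar>x - t\<bar> = \<bar>g x - g t - d * (x - t)\<bar>"
      by (metis abs_mult)
    also have "\<dots> \<le> C * \<bar>x - t\<bar> * \<bar>x - t\<bar>"
      using remainder[of x] x by (simp add: power2_eq_square mult.assoc)
    finally show "norm ((g x - g t) / (x - t) - d) \<le> C * \<bar>x - t\<bar>"
      using x by simp
  qed (use t in auto)
  moreover have "((\<lambda>x. C * \<bar>x - t\<bar>) \<longlongrightarrow> 0) (at t)"
    by (auto intro!: tendsto_eq_intros)
  ultimately have "((\<lambda>x. (g x - g t) / (x - t) - d) \<longlongrightarrow> 0) (at t)"
    by (rule Lim_null_comparison)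
  then show ?thesis
    unfolding has_field_derivative_iff by (simp add: LIM_zero_iff)
qed

lemma taylor_quadratic_remainder:
  fixes g g' g'' :: "real \<Rightarrow> real"
  assumes g': "\<And>\<tau>. (g has_real_derivative g' \<tau>) (at \<tau>)"
    and g'': "\<And>\<tau>. (g' has_real_derivative g'' \<tau>) (at \<tau>)"
    and bound: "\<And>\<tau>. \<tau> \<in> {a..b} \<Longrightarrow> \<bar>g'' \<tau>\<bar> \<le> C"
    and t: "t \<in> {a..b}" and x: "x \<in> {a..b}"
  shows "\<bar>g x - g t - g' t * (x - t)\<bar> \<le> C / 2 * (x - t)\<^sup>2"
proof (cases "x = t")
  case False
  define diff where "diff m = (if m = 0 then g else if m = 1 then g' else g'')" for m :: nat
  have "\<exists>\<xi>. (if x < t then x < \<xi> \<and> \<xi> < t else t < \<xi> \<and> \<xi> < x) \<and>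
      g x = (\<Sum>m<2. diff m t / fact m * (x - t) ^ m) + diff 2 \<xi> / fact 2 * (x - t)\<^sup>2"
    by (rule Taylor) (use t x False g' g'' in \<open>auto simp: diff_def less_2_cases_iff\<close>)
  then obtain \<xi> where \<xi>: "if x < t then x < \<xi> \<and> \<xi> < t else t < \<xi> \<and> \<xi> < x"
    and taylor: "g x = (\<Sum>m<2. diff m t / fact m * (x - t) ^ m) + diff 2 \<xi> / fact 2 * (x - t)\<^sup>2"
    by blast
  have "\<xi> \<in> {a..b}" using \<xi> t x by (auto split: if_splits)
  have "\<bar>g x - g t - g' t * (x - t)\<bar> = \<bar>g'' \<xi>\<bar> / 2 * (x - t)\<^sup>2"
    using taylor by (simp add: diff_def numeral_2_eq_2 abs_mult)
  also have "\<dots> \<le> C / 2 * (x - t)\<^sup>2"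
    using bound[OF \<open>\<xi> \<in> {a..b}\<close>] by (intro mult_right_mono) auto
  finally show ?thesis .
qed simp

lemma lipschitz_on_imp_abs_cont_on:
  assumes "L-lipschitz_on {a..b} f"
  shows "abs_cont_on a b f"
  unfolding abs_cont_on_def
proof (intro allI impI)
  fix \<epsilon> :: real assume "0 < \<epsilon>"
  have "L \<ge> 0" using assms by (rule lipschitz_on_nonneg)
  show "\<exists>\<delta>>0. \<forall>n l r. (\<forall>i<n. a \<le> l i \<and> l i \<le> r i \<and> r i \<le> b) \<and>
      (\<forall>i<n. \<forall>j<n. i \<noteq> j \<longrightarrow> r i \<le> l j \<or> r j \<le> l i) \<and> (\<Sum>i<n. r i - l i) < \<delta> \<longrightarrow>
      (\<Sum>i<n. \<bar>f (r i) - f (l i)\<bar>) < \<epsilon>"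
  proof (intro exI[of _ "\<epsilon> / (L + 1)"] conjI allI impI)
    show "0 < \<epsilon> / (L + 1)" using \<open>0 < \<epsilon>\<close> \<open>L \<ge> 0\<close> by simp
    fix n l r
    assume H: "(\<forall>i<n. a \<le> l i \<and> l i \<le> r i \<and> r i \<le> b) \<and>
      (\<forall>i<n. \<forall>j<n. i \<noteq> j \<longrightarrow> r i \<le> l j \<or> r j \<le> l i) \<and> (\<Sum>i<n. r i - l i) < \<epsilon> / (L + 1)"
    have "\<bar>f (r i) - f (l i)\<bar> \<le> L * (r i - l i)" if "i < n" for i
      using H that lipschitz_onD[OF assms, of "r i" "l i"] by (auto simp: dist_real_def)
    then have "(\<Sum>i<n. \<bar>f (r i) - f (l i)\<bar>) \<le> (\<Sum>i<n. L * (r i - l i))"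
      by (intro sum_mono) auto
    also have "\<dots> \<le> (L + 1) * (\<Sum>i<n. r i - l i)"
    proof -
      have "0 \<le> (\<Sum>i<n. r i - l i)" using H by (intro sum_nonneg) auto
      then show ?thesis by (simp add: sum_distrib_left[symmetric] distrib_right)
    qed
    also have "\<dots> < (L + 1) * (\<epsilon> / (L + 1))"
      using H \<open>L \<ge> 0\<close> by (intro mult_strict_left_mono) auto
    also have "\<dots> = \<epsilon>" using \<open>L \<ge> 0\<close> by simp
    finally show "(\<Sum>i<n. \<bar>f (r i) - f (l i)\<bar>) < \<epsilon>" .
  qed
qed

lemma concave_on_if_below_tangents:
  fixes h d :: "real \<Rightarrow> real"
  assumes "convex I" and tangent: "\<And>t \<tau>. t \<in> I \<Longrightarrow> \<tau> \<in> I \<Longrightarrow> h \<tau> \<le> h t + d t * (\<tau> - t)"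
  shows "concave_on I h"
  unfolding concave_on_def
  by (rule pos_convex_function[OF \<open>convex I\<close>, where f'="\<lambda>t. - d t"]) (use tangent in fastforce)

lemma concave_on_Inf:
  fixes g :: "'a::real_vector \<Rightarrow> 'b \<Rightarrow> real"
  assumes "S \<noteq> {}" and bdd: "\<And>x. x \<in> I \<Longrightarrow> bdd_below ((\<lambda>s. g x s) ` S)"
    and concave: "\<And>s. s \<in> S \<Longrightarrow> concave_on I (\<lambda>x. g x s)"
  shows "concave_on I (\<lambda>x. INF s\<in>S. g x s)"
proof -
  have "convex I" using \<open>S \<noteq> {}\<close> concave by (auto simp: concave_on_iff)
  moreover have "u * (INF s\<in>S. g x s) + v * (INF s\<in>S. g y s) \<le> (INF s\<in>S. g (u *\<^sub>R x + v *\<^sub>R y) s)"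
    if "x \<in> I" "y \<in> I" "u \<ge> 0" "v \<ge> 0" "u + v = 1" for x y u v
  proof (rule cINF_greatest[OF \<open>S \<noteq> {}\<close>])
    fix s assume "s \<in> S"
    have "u * (INF s\<in>S. g x s) + v * (INF s\<in>S. g y s) \<le> u * g x s + v * g y s"
      using that \<open>s \<in> S\<close> bdd by (intro add_mono mult_left_mono cINF_lower) auto
    also have "\<dots> \<le> g (u *\<^sub>R x + v *\<^sub>R y) s"
      using concave[OF \<open>s \<in> S\<close>] that by (auto simp: concave_on_iff)
    finally show "u * (INF s\<in>S. g x s) + v * (INF s\<in>S. g y s) \<le> g (u *\<^sub>R x + v *\<^sub>R y) s" .
  qed
  ultimately show ?thesis by (auto simp: concave_on_iff)
qed

locale quadratic_family =
  fixes G D :: "real \<Rightarrow> 'a \<Rightarrow> real" and S :: "'a set" and a b K E :: real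
  assumes ab: "a < b" and S_nonempty: "S \<noteq> {}"
    and bdd_below_G: "\<And>t. bdd_below (G t ` S)"
    and expansion: "\<And>s t \<tau>. s \<in> S \<Longrightarrow> t \<in> {a..b} \<Longrightarrow> \<tau> \<in> {a..b} \<Longrightarrow>
        \<bar>G \<tau> s - G t s - D t s * (\<tau> - t)\<bar> \<le> K * (\<tau> - t)\<^sup>2"
    and D_bound: "\<And>s t. s \<in> S \<Longrightarrow> t \<in> {a..b} \<Longrightarrow> \<bar>D t s\<bar> \<le> E"
    and K_nonneg: "0 \<le> K" and E_nonneg: "0 \<le> E"
begin

definition envelope :: "real \<Rightarrow> real" where
  "envelope t = (INF s\<in>S. G t s)"

lemma envelope_le: "s \<in> S \<Longrightarrow> envelope t \<le> G t s"
  unfolding envelope_def by (rule cINF_lower[OF bdd_below_G])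

lemma le_envelope: "(\<And>s. s \<in> S \<Longrightarrow> c \<le> G t s) \<Longrightarrow> c \<le> envelope t"
  unfolding envelope_def by (rule cINF_greatest[OF S_nonempty])

lemma lipschitz_envelope: "(E + K * (b - a))-lipschitz_on {a..b} envelope"
proof -
  have one_sided: "envelope t1 \<le> envelope t2 + (E + K * (b - a)) * \<bar>t1 - t2\<bar>"
    if t: "t1 \<in> {a..b}" "t2 \<in> {a..b}" for t1 t2
  proof -
    have "envelope t1 - (E + K * (b - a)) * \<bar>t1 - t2\<bar> \<le> G t2 s" if s: "s \<in> S" for s
    proof -
      have "\<bar>D t2 s * (t1 - t2)\<bar> \<le> E * \<bar>t1 - t2\<bar>"
        unfolding abs_mult by (rule mult_right_mono[OF D_bound[OF s t(2)]]) simp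
      moreover have "\<bar>t1 - t2\<bar> \<le> b - a" using t by auto
      then have "(t1 - t2)\<^sup>2 \<le> (b - a) * \<bar>t1 - t2\<bar>"
        by (metis abs_ge_zero mult_right_mono power2_abs power2_eq_square)
      then have "K * (t1 - t2)\<^sup>2 \<le> K * (b - a) * \<bar>t1 - t2\<bar>"
        using mult_left_mono[OF _ K_nonneg] by (simp add: mult.assoc)
      ultimately show ?thesis
        using expansion[OF s t(2) t(1)] envelope_le[OF s, of t1]
        by (simp add: algebra_simps abs_le_iff)
    qed
    then show ?thesis using le_envelope by fastforce
  qed
  show ?thesis
  proof (rule lipschitz_onI)
    show "0 \<le> E + K * (b - a)" using E_nonneg K_nonneg ab by simp
    show "dist (envelope t1) (envelope t2) \<le> (E + K * (b - a)) * dist t1 t2"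
      if "t1 \<in> {a..b}" "t2 \<in> {a..b}" for t1 t2
      using one_sided[OF that] one_sided[OF that(2,1)]
      by (simp add: dist_real_def abs_le_iff abs_minus_commute)
  qed
qed

lemma concave_envelope: "concave_on {a..b} (\<lambda>t. envelope t - K * t\<^sup>2)"
proof -
  have concave: "concave_on {a..b} (\<lambda>t. - K * t\<^sup>2 + G t s)" if s: "s \<in> S" for s
  proof (rule concave_on_if_below_tangents[where d="\<lambda>t. D t s - 2 * K * t"])
    fix t \<tau> assume "t \<in> {a..b}" "\<tau> \<in> {a..b}"
    then show "- K * \<tau>\<^sup>2 + G \<tau> s \<le> - K * t\<^sup>2 + G t s + (D t s - 2 * K * t) * (\<tau> - t)"
      using expansion[OF s] by (fastforce simp: abs_le_iff power2_eq_square algebra_simps)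
  qed simp
  have bdd: "bdd_below ((\<lambda>s. c + G t s) ` S)" for c t
    using bdd_below_G[of t] by (metis add_left_mono bdd_below.E bdd_below.I2 imageI)
  have "concave_on {a..b} (\<lambda>t. INF s\<in>S. - K * t\<^sup>2 + G t s)"
    by (rule concave_on_Inf[OF S_nonempty bdd concave])
  moreover have "(INF s\<in>S. - K * t\<^sup>2 + G t s) = envelope t - K * t\<^sup>2" for t
    unfolding envelope_def using Inf_add_eq[OF bdd_below_G S_nonempty, of "- K * t\<^sup>2" t] by simp
  ultimately show ?thesis by simp
qed

lemma envelope_has_real_derivative_at_minimizer:
  assumes t: "t \<in> {a<..<b}" and s: "s \<in> S" and minimizer: "G t s = envelope t"
    and "envelope differentiable (at t)"
  shows "(envelope has_real_derivative D t s) (at t)"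
proof -
  obtain d where d: "(envelope has_real_derivative d) (at t)"
    using assms(4) real_differentiable_def by blast
  have "((\<lambda>\<tau>. G \<tau> s) has_real_derivative D t s) (at t)"
    using t expansion[OF s] by (intro has_real_derivative_if_quadratic_remainder[of a t b _ _ K]) auto
  then have "D t s - d = 0"
  proof (rule DERIV_local_min[OF DERIV_diff[OF _ d]])
    show "\<forall>y. \<bar>t - y\<bar> < 1 \<longrightarrow> G t s - envelope t \<le> G y s - envelope y"
      using minimizer envelope_le[OF s] by auto
  qed simp
  then show ?thesis using d by simp
qed

lemma abs_cont_on_envelope: "{c..d} \<subseteq> {a..b} \<Longrightarrow> abs_cont_on c d envelope"
  by (rule lipschitz_on_imp_abs_cont_on[OF lipschitz_on_subset[OF lipschitz_envelope]])

lemma AE_envelope_has_real_derivative: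
  "AE t in lborel. t \<in> {a<..<b} \<longrightarrow>
     (\<forall>s\<in>S. G t s = envelope t \<longrightarrow> (envelope has_real_derivative D t s) (at t))"
proof -
  have "convex_on {a<..<b} (\<lambda>t. K * t\<^sup>2 - envelope t)"
    using convex_on_subset[OF concave_envelope[unfolded concave_on_def], of "{a<..<b}"]
    by (simp add: subset_iff)
  then obtain N where "countable N"
    and diff: "\<And>t. t \<in> {a<..<b} \<Longrightarrow> t \<notin> N \<Longrightarrow> (\<lambda>t. K * t\<^sup>2 - envelope t) differentiable (at t)"
    by (rule convex_on_differentiable_off_countable) blast
  have differentiable: "envelope differentiable (at t)" if "t \<in> {a<..<b}" "t \<notin> N" for t
  proof -
    have "(\<lambda>t. K * t\<^sup>2 - (K * t\<^sup>2 - envelope t)) differentiable (at t)"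
      by (rule differentiable_diff[OF _ diff[OF that]]) (intro derivative_intros)
    then show ?thesis by simp
  qed
  show ?thesis
    using AE_not_in[OF countable_imp_null_set_lborel[OF \<open>countable N\<close>]]
    by eventually_elim (use differentiable envelope_has_real_derivative_at_minimizer in blast)
qed

end

lemma normsqH_nonneg: "0 \<le> normsqH f"
proof -
  have "0 \<le> integral {-pi..pi} (\<lambda>x. f x * f x)"
    by (cases "(\<lambda>x. f x * f x) integrable_on {-pi..pi}")
       (auto intro: integral_nonneg simp: not_integrable_integral)
  then show ?thesis unfolding normsqH_def ipH_def by simp
qed

lemma abs_integral_le_2pi:
  fixes f :: "real \<Rightarrow> real"
  assumes "continuous_on {-pi..pi} f" and "\<And>x. x \<in> {-pi..pi} \<Longrightarrow> \<bar>f x\<bar> \<le> C"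
  shows "\<bar>integral {-pi..pi} f\<bar> / (2 * pi) \<le> C"
  using integral_bound[of "-pi" pi f C] assms pi_gt_zero by (simp add: divide_le_eq mult.commute)

lemma abs_ipH_le:
  assumes "continuous_on {-pi..pi} f" "continuous_on {-pi..pi} g"
    and f: "\<And>x. x \<in> {-pi..pi} \<Longrightarrow> \<bar>f x\<bar> \<le> A" and g: "\<And>x. x \<in> {-pi..pi} \<Longrightarrow> \<bar>g x\<bar> \<le> B"
  shows "\<bar>ipH f g\<bar> \<le> A * B"
proof -
  have "\<bar>f x * g x\<bar> \<le> A * B" if "x \<in> {-pi..pi}" for x
    unfolding abs_mult using f[OF that] g[OF that] by (intro mult_mono) auto
  then have "\<bar>integral {-pi..pi} (\<lambda>x. f x * g x)\<bar> / (2 * pi) \<le> A * B"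
    using assms by (intro abs_integral_le_2pi continuous_intros)
  then show ?thesis unfolding ipH_def by (simp add: abs_mult)
qed

lemma normsqH_quadratic_expansion:
  fixes w w' w'' :: "real \<Rightarrow> real \<Rightarrow> real"
  assumes w': "\<And>\<tau> x. ((\<lambda>\<tau>. w \<tau> x) has_real_derivative w' \<tau> x) (at \<tau>)"
    and w'': "\<And>\<tau> x. ((\<lambda>\<tau>. w' \<tau> x) has_real_derivative w'' \<tau> x) (at \<tau>)"
    and cont: "\<And>\<tau>. continuous_on {-pi..pi} (w \<tau>)" "\<And>\<tau>. continuous_on {-pi..pi} (w' \<tau>)"
    and bounds: "\<And>\<tau> x. \<tau> \<in> {a..b} \<Longrightarrow> x \<in> {-pi..pi} \<Longrightarrow>
        \<bar>w \<tau> x\<bar> \<le> B0 \<and> \<bar>w' \<tau> x\<bar> \<le> B1 \<and> \<bar>w'' \<tau> x\<bar> \<le> B2"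
    and t: "t \<in> {a..b}" and \<tau>: "\<tau> \<in> {a..b}"
  shows "\<bar>normsqH (w \<tau>) - normsqH (w t) - 2 * ipH (w' t) (w t) * (\<tau> - t)\<bar>
    \<le> (B1\<^sup>2 + B0 * B2) * (\<tau> - t)\<^sup>2"
proof -
  define e where "e x = w \<tau> x * w \<tau> x - w t x * w t x - 2 * w' t x * w t x * (\<tau> - t)" for x
  have "\<bar>e x\<bar> \<le> (B1\<^sup>2 + B0 * B2) * (\<tau> - t)\<^sup>2" if x: "x \<in> {-pi..pi}" for x
  proof -
    have d1: "((\<lambda>\<tau>. w \<tau> x * w \<tau> x) has_real_derivative 2 * w' \<sigma> x * w \<sigma> x) (at \<sigma>)" for \<sigma>
      using DERIV_mult[OF w'[of x \<sigma>] w'[of x \<sigma>]] by (simp add: algebra_simps)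
    have d2: "((\<lambda>\<sigma>. 2 * w' \<sigma> x * w \<sigma> x) has_real_derivative
        2 * (w'' \<sigma> x * w \<sigma> x + w' \<sigma> x * w' \<sigma> x)) (at \<sigma>)" for \<sigma>
      using DERIV_cmult[OF DERIV_mult[OF w''[of x \<sigma>] w'[of x \<sigma>]], of 2] by (simp add: algebra_simps)
    have d2_bound: "\<bar>2 * (w'' \<sigma> x * w \<sigma> x + w' \<sigma> x * w' \<sigma> x)\<bar> \<le> 2 * (B1\<^sup>2 + B0 * B2)"
      if "\<sigma> \<in> {a..b}" for \<sigma>
    proof -
      have "\<bar>w'' \<sigma> x * w \<sigma> x\<bar> \<le> B2 * B0" "\<bar>w' \<sigma> x * w' \<sigma> x\<bar> \<le> B1 * B1"
        unfolding abs_mult by (intro mult_mono; use bounds[OF that x] in force)+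
      then show ?thesis
        using abs_triangle_ineq[of "w'' \<sigma> x * w \<sigma> x" "w' \<sigma> x * w' \<sigma> x"]
        by (simp add: power2_eq_square algebra_simps)
    qed
    show ?thesis
      using taylor_quadratic_remainder[OF d1 d2 d2_bound t \<tau>] by (simp add: e_def algebra_simps)
  qed
  then have "\<bar>integral {-pi..pi} e\<bar> / (2 * pi) \<le> (B1\<^sup>2 + B0 * B2) * (\<tau> - t)\<^sup>2"
    unfolding e_def using cont by (intro abs_integral_le_2pi continuous_intros) auto
  moreover have integral_e: "integral {-pi..pi} e = integral {-pi..pi} (\<lambda>x. w \<tau> x * w \<tau> x)
      - integral {-pi..pi} (\<lambda>x. w t x * w t x) - 2 * (\<tau> - t) * integral {-pi..pi} (\<lambda>x. w' t x * w t x)"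
    unfolding e_def using cont
    by (subst integral_diff integral_mult_right[symmetric]
        | auto intro!: integrable_continuous_interval continuous_intros simp: algebra_simps)+
  moreover have "normsqH (w \<tau>) - normsqH (w t) - 2 * ipH (w' t) (w t) * (\<tau> - t)
      = integral {-pi..pi} e / (2 * pi)"
    unfolding normsqH_def ipH_def integral_e by (simp add: field_simps)
  ultimately show ?thesis
    by (simp add: abs_divide)
qed

lemma smooth1_continuous: "smooth1 \<phi> \<Longrightarrow> continuous_on UNIV \<phi>"
  unfolding smooth1_def
  by (metis funpow_0 continuous_at_imp_continuous_on differentiable_imp_continuous_within)

lemma smooth2_pderivs:
  assumes "smooth2 u"
  shows "continuous_on UNIV (\<lambda>(t, x). pderivs bs u t x)"
    and "continuous_on UNIV (pderivs bs u t)"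
    and "((\<lambda>\<tau>. pderivs bs u \<tau> x) has_real_derivative pderivs (True # bs) u t x) (at t)"
proof -
  have u: "continuous_on UNIV (\<lambda>(t, x). pderivs bs u t x)"
    "\<And>t x. (\<lambda>\<tau>. pderivs bs u \<tau> x) differentiable (at t)"
    "\<And>t x. pderivs bs u t differentiable (at x)"
    using assms unfolding smooth2_def by blast+
  show "continuous_on UNIV (\<lambda>(t, x). pderivs bs u t x)" by (fact u(1))
  show "continuous_on UNIV (pderivs bs u t)"
    using u(3) by (auto intro!: continuous_at_imp_continuous_on differentiable_imp_continuous_within)
  show "((\<lambda>\<tau>. pderivs bs u \<tau> x) has_real_derivative pderivs (True # bs) u t x) (at t)"
    using u(2) by (simp add: pt_def DERIV_deriv_iff_real_differentiable)
qed

lemma smooth2_bounded_on_rectangle: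
  assumes "smooth2 u"
  shows "\<exists>B. \<forall>t\<in>{a..b}. \<forall>x\<in>{c..d}. \<bar>pderivs bs u t x\<bar> \<le> B"
proof -
  have "compact ({a..b} \<times> {c..d})" by (intro compact_Times compact_Icc)
  then obtain B where "\<And>p. p \<in> {a..b} \<times> {c..d} \<Longrightarrow> norm ((\<lambda>(t, x). pderivs bs u t x) p) \<le> B"
    by (rule continuous_on_compact_bound[OF _ continuous_on_subset[OF smooth2_pderivs(1)[OF assms]]])
      auto
  then show ?thesis by force
qed

lemma quadratic_family_shift_distance:
  assumes u: "smooth2 u" and \<phi>: "continuous_on UNIV \<phi>" and "a < b"
  obtains K E where "quadratic_family (\<lambda>t s. normsqH (\<lambda>x. u t x - \<phi> (x - s)))
    (\<lambda>t s. 2 * ipH (\<lambda>x. pt u t x) (\<lambda>x. u t x - \<phi> (x - s))) {-pi..pi} a b K E"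
proof -
  note u0 = smooth2_pderivs[OF u, where bs="[]", simplified]
  note u1 = smooth2_pderivs[OF u, where bs="[True]", simplified]
  obtain B0 where B0: "\<And>t x. t \<in> {a..b} \<Longrightarrow> x \<in> {-pi..pi} \<Longrightarrow> \<bar>u t x\<bar> \<le> B0"
    using smooth2_bounded_on_rectangle[OF u, of a b "-pi" pi "[]"]
    by (simp only: pderivs.simps if_True) blast
  obtain B1 where B1: "\<And>t x. t \<in> {a..b} \<Longrightarrow> x \<in> {-pi..pi} \<Longrightarrow> \<bar>pt u t x\<bar> \<le> B1"
    using smooth2_bounded_on_rectangle[OF u, of a b "-pi" pi "[True]"]
    by (simp only: pderivs.simps if_True) blast
  obtain B2 where B2: "\<And>t x. t \<in> {a..b} \<Longrightarrow> x \<in> {-pi..pi} \<Longrightarrow> \<bar>pt (pt u) t x\<bar> \<le> B2"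
    using smooth2_bounded_on_rectangle[OF u, of a b "-pi" pi "[True, True]"]
    by (simp only: pderivs.simps if_True) blast
  obtain P where P: "\<And>y. y \<in> {-2*pi..2*pi} \<Longrightarrow> \<bar>\<phi> y\<bar> \<le> P"
    by (rule continuous_on_compact_bound[OF compact_Icc continuous_on_subset[OF \<phi>]]) auto
  have shift_bound: "\<bar>u t x - \<phi> (x - s)\<bar> \<le> B0 + P"
    if "s \<in> {-pi..pi}" "t \<in> {a..b}" "x \<in> {-pi..pi}" for s t x
    using B0[of t x] P[of "x - s"] that by auto
  have cont_shift: "continuous_on {-pi..pi} (\<lambda>x. u t x - \<phi> (x - s))" for t s
    by (intro continuous_intros continuous_on_subset[OF u0(2)] continuous_on_compose2[OF \<phi>]) auto
  have cont_pt: "continuous_on {-pi..pi} (pt u t)" for t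
    using continuous_on_subset[OF u1(2)] by blast
  have "quadratic_family (\<lambda>t s. normsqH (\<lambda>x. u t x - \<phi> (x - s)))
    (\<lambda>t s. 2 * ipH (\<lambda>x. pt u t x) (\<lambda>x. u t x - \<phi> (x - s))) {-pi..pi} a b
    (B1\<^sup>2 + (B0 + P) * B2) (2 * (B1 * (B0 + P)))"
  proof
    fix s t \<tau> assume s: "s \<in> {-pi..pi}" and "t \<in> {a..b}" "\<tau> \<in> {a..b}"
    show "\<bar>normsqH (\<lambda>x. u \<tau> x - \<phi> (x - s)) - normsqH (\<lambda>x. u t x - \<phi> (x - s))
        - 2 * ipH (\<lambda>x. pt u t x) (\<lambda>x. u t x - \<phi> (x - s)) * (\<tau> - t)\<bar>
      \<le> (B1\<^sup>2 + (B0 + P) * B2) * (\<tau> - t)\<^sup>2"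
    proof (rule normsqH_quadratic_expansion[where w''="pt (pt u)"])
      show "((\<lambda>\<tau>. u \<tau> x - \<phi> (x - s)) has_real_derivative pt u \<sigma> x) (at \<sigma>)" for \<sigma> x
        using DERIV_diff[OF u0(3) DERIV_const] by simp
      show "\<bar>u \<sigma> x - \<phi> (x - s)\<bar> \<le> B0 + P \<and> \<bar>pt u \<sigma> x\<bar> \<le> B1 \<and> \<bar>pt (pt u) \<sigma> x\<bar> \<le> B2"
        if "\<sigma> \<in> {a..b}" "x \<in> {-pi..pi}" for \<sigma> x
        using shift_bound[OF s that] B1[OF that] B2[OF that] by blast
    qed (use u1(3) cont_shift cont_pt \<open>t \<in> {a..b}\<close> \<open>\<tau> \<in> {a..b}\<close> in auto)
  next
    fix s t assume st: "s \<in> {-pi..pi}" "t \<in> {a..b}"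
    have "\<bar>ipH (pt u t) (\<lambda>x. u t x - \<phi> (x - s))\<bar> \<le> B1 * (B0 + P)"
      by (rule abs_ipH_le[OF cont_pt cont_shift]) (use B1 shift_bound st in auto)
    then show "\<bar>2 * ipH (\<lambda>x. pt u t x) (\<lambda>x. u t x - \<phi> (x - s))\<bar> \<le> 2 * (B1 * (B0 + P))"
      by simp
  next
    show "bdd_below ((\<lambda>s. normsqH (\<lambda>x. u t x - \<phi> (x - s))) ` {-pi..pi})" for t
      by (rule bdd_belowI2[where m=0]) (rule normsqH_nonneg)
  next
    show "0 \<le> B1\<^sup>2 + (B0 + P) * B2" "0 \<le> 2 * (B1 * (B0 + P))"
      using B0[of a 0] B1[of a 0] B2[of a 0] P[of 0] \<open>a < b\<close> by auto
  qed (use \<open>a < b\<close> in auto)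
  then show ?thesis by (rule that)
qed

theorem lemma3p8:
  fixes M T :: real and \<phi> :: "real \<Rightarrow> real" and u :: "real \<Rightarrow> real \<Rightarrow> real"
  assumes M_pos: "M > 0"
    and phi_smooth: "smooth1 \<phi>"
    and phi_odd: "\<forall>x. \<phi> (- x) = - \<phi> x"
    and phi_per: "per2pi \<phi>"
    and phi_mean: "integral {-pi..pi} \<phi> = 0"
    and coercive: "\<forall>w. H2per w \<and> w 0 = 0 \<longrightarrow>
        normsqH (deriv (deriv w)) - ipH (\<lambda>x. w x * deriv \<phi> x) w \<ge> M * normsqH w"
    and u_smooth: "smooth2 u"
    and u_per: "\<forall>t\<in>{0..T}. per2pi (u t)"
    and u_mean: "\<forall>t\<in>{0..T}. integral {-pi..pi} (u t) = 0"
  shows "abs_cont_on 0 T (\<lambda>t. Fdist \<phi> (u t)) \<and>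
    (AE t in lborel. t \<in> {0..T} \<longrightarrow>
       (\<forall>s\<in>{-pi..pi}. normsqH (\<lambda>x. u t x - \<phi> (x - s)) = Fdist \<phi> (u t) \<longrightarrow>
          ((\<lambda>\<tau>. Fdist \<phi> (u \<tau>)) has_real_derivative
             2 * ipH (\<lambda>x. pt u t x) (\<lambda>x. u t x - \<phi> (x - s))) (at t)))"
proof -
  define a b where "a = (-1 :: real)" and "b = \<bar>T\<bar> + 1"
  have "a < 0" and "T < b" and "a < b" unfolding a_def b_def by auto
  obtain K E where "quadratic_family (\<lambda>t s. normsqH (\<lambda>x. u t x - \<phi> (x - s)))
      (\<lambda>t s. 2 * ipH (\<lambda>x. pt u t x) (\<lambda>x. u t x - \<phi> (x - s))) {-pi..pi} a b K E"
    using quadratic_family_shift_distance[OF u_smooth smooth1_continuous[OF phi_smooth] \<open>a < b\<close>] .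
  then interpret quadratic_family "\<lambda>t s. normsqH (\<lambda>x. u t x - \<phi> (x - s))"
      "\<lambda>t s. 2 * ipH (\<lambda>x. pt u t x) (\<lambda>x. u t x - \<phi> (x - s))" "{-pi..pi}" a b K E .
  have F: "Fdist \<phi> (u t) = envelope t" for t
    unfolding envelope_def Fdist_def ..
  show ?thesis
    unfolding F using abs_cont_on_envelope[of 0 T] \<open>a < 0\<close> \<open>T < b\<close>
    by (auto intro: AE_mp[OF AE_envelope_has_real_derivative AE_I2])
qed

end
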